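(* Let $n$ be a positive integer. Let $V_n\subseteq T_n$ be the set of triples $(A,B,C)\in T_n$ such that $C$ has at least one point strictly below the horizontal axis and either $B$ ends with an up step or $B$ is empty. Let $D_n^-\subseteq D_n$ be the set of pairs $(H,X)\in D_n$ in which $X$ is strictly below the horizontal axis. Define $t:V_n\to D_n^-$ as follows: for $(A,B,C)\in V_n$, let $K$ be the leftmost point of $C$ of minimal height, let $K$ cut $C$ into a left part $C_1$ and a right part $C_2$, and set $t(A,B,C)=(H,X)$, where $H$ is the concatenation of $C_1$, $A$, $B$, $C_2$ (in this order) and $X$ is the point of $H$ where $A$ ends and $B$ begins. Then $t$ is a bijection from $V_n$ onto $D_n^-$.
   Context: A lattice path here is a finite (possibly empty) sequence of steps, each an up step $(1,1)$ or a down step $(1,-1)$, drawn as a polygonal line from a given starting lattice point; its lattice points are its starting point and the endpoints of its steps; the height of a point is its vertical coordinate. $T_n$ is the set of ordered triples $(A,B,C)$ of lattice paths such that for some nonnegative integers $i,j,k$ with $i+j+k=n$, $A$ has $i$ up and $i$ down steps, $B$ has $j$ up and $j$ down steps, and $C$ has $k$ up and $k$ down steps; each of $A,B,C$ is regarded as drawn starting (and hence ending) on the horizontal axis, and statements about heights of points of $C$ or of $C$ being above/below the axis refer to this drawing. $D_n$ is the set of pairs $(H,X)$ where $H$ is a lattice path with $n$ up steps and $n$ down steps drawn from $(0,0)$ to $(2n,0)$ and $X$ is one of the $2n+1$ lattice points of $H$. Concatenation of paths means drawing them successively, each starting at the endpoint of the preceding one, the first starting at $(0,0)$. *)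

theory Defs
  imports Main
begin

text \<open>A lattice path is a list of steps: True = up step (1,1), False = down step (1,-1).
  The lattice points of a path p are indexed by k \<in> {0..length p}: point k is the
  endpoint of the first k steps (point 0 is the starting point).\<close>

type_synonym lpath = "bool list"

definition step_ht :: "bool \<Rightarrow> int" where
  "step_ht b = (if b then 1 else -1)"

definition ht :: "lpath \<Rightarrow> int" where
  "ht p = sum_list (map step_ht p)"

definition pt_ht :: "lpath \<Rightarrow> nat \<Rightarrow> int" where
  "pt_ht p k = ht (take k p)"

definition ups :: "lpath \<Rightarrow> nat" where
  "ups p = length (filter (\<lambda>b. b) p)"

definition downs :: "lpath \<Rightarrow> nat" where
  "downs p = length (filter (\<lambda>b. \<not> b) p)"

definition T :: "nat \<Rightarrow> (lpath \<times> lpath \<times> lpath) set" where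
  "T n = {(A, B, C). \<exists>i j k. i + j + k = n \<and>
            ups A = i \<and> downs A = i \<and> ups B = j \<and> downs B = j \<and> ups C = k \<and> downs C = k}"

definition V :: "nat \<Rightarrow> (lpath \<times> lpath \<times> lpath) set" where
  "V n = {(A, B, C). (A, B, C) \<in> T n \<and>
            (\<exists>k \<le> length C. pt_ht C k < 0) \<and> (B = [] \<or> last B)}"

definition D :: "nat \<Rightarrow> (lpath \<times> nat) set" where
  "D n = {(H, X). ups H = n \<and> downs H = n \<and> X \<le> length H}"

definition Dminus :: "nat \<Rightarrow> (lpath \<times> nat) set" where
  "Dminus n = {(H, X). (H, X) \<in> D n \<and> pt_ht H X < 0}"

definition min_ht :: "lpath \<Rightarrow> int" where
  "min_ht C = Min {pt_ht C k | k. k \<le> length C}"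

definition cut_pt :: "lpath \<Rightarrow> nat" where
  "cut_pt C = (LEAST k. k \<le> length C \<and> pt_ht C k = min_ht C)"

definition tmap :: "lpath \<times> lpath \<times> lpath \<Rightarrow> lpath \<times> nat" where
  "tmap = (\<lambda>(A, B, C). let m = cut_pt C in
            (take m C @ A @ B @ drop m C, m + length A))"

end

theory Submission
  imports Defs
begin

text \<open>The inverse of \<open>t\<close> cuts \<open>H\<close> at three points. With \<open>h < 0\<close> the height of \<open>X\<close>,
  \<open>A\<close> starts where \<open>H\<close> first reaches level \<open>h\<close> (this point becomes the leftmost minimum of
  \<open>C\<close>), and \<open>B\<close> ends at the first point after \<open>X\<close> from which \<open>H\<close> never again goes below
  level \<open>h\<close>. That point is either \<open>X\<close> itself or is entered by an up step from level \<open>h - 1\<close>,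
  which is exactly why \<open>B\<close> must be empty or end with an up step. Since heights change by
  \<open>\<plusminus>1\<close> per step, both cut points have height exactly \<open>h\<close>, so \<open>A\<close> and \<open>B\<close> are balanced.\<close>

lemma ht_Nil [simp]: "ht [] = 0"
  by (simp add: ht_def)

lemma ht_Cons [simp]: "ht (b # p) = step_ht b + ht p"
  by (simp add: ht_def)

lemma ht_append [simp]: "ht (xs @ ys) = ht xs + ht ys"
  by (simp add: ht_def)

lemma ups_append [simp]: "ups (xs @ ys) = ups xs + ups ys"
  by (simp add: ups_def)

lemma downs_append [simp]: "downs (xs @ ys) = downs xs + downs ys"
  by (simp add: downs_def)

lemma ht_eq_ups_minus_downs: "ht p = int (ups p) - int (downs p)"
  by (induction p) (auto simp: ups_def downs_def step_ht_def)

lemma ht_eq_0_iff: "ht p = 0 \<longleftrightarrow> ups p = downs p"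
  by (simp add: ht_eq_ups_minus_downs)

lemma pt_ht_0 [simp]: "pt_ht p 0 = 0"
  by (simp add: pt_ht_def)

lemma pt_ht_beyond: "length p \<le> k \<Longrightarrow> pt_ht p k = ht p"
  by (simp add: pt_ht_def)

lemma pt_ht_Suc: "k < length p \<Longrightarrow> pt_ht p (Suc k) = pt_ht p k + step_ht (p ! k)"
  by (simp add: pt_ht_def take_Suc_conv_app_nth)

lemma pt_ht_Suc_diff: "\<bar>pt_ht p (Suc k) - pt_ht p k\<bar> \<le> 1"
  by (cases "k < length p") (auto simp: pt_ht_Suc step_ht_def pt_ht_beyond)

lemma pt_ht_append_left: "k \<le> length xs \<Longrightarrow> pt_ht (xs @ ys) k = pt_ht xs k"
  by (simp add: pt_ht_def)

lemma pt_ht_append_right: "pt_ht (xs @ ys) (length xs + k) = ht xs + pt_ht ys k"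
  by (simp add: pt_ht_def)

lemma ht_drop_take:
  assumes "a \<le> b"
  shows "ht (drop a (take b p)) = pt_ht p b - pt_ht p a"
proof -
  have "take b p = take a p @ drop a (take b p)"
    using assms by (metis append_take_drop_id min.absorb1 take_take)
  then show ?thesis
    unfolding pt_ht_def by (metis ht_append add_diff_cancel_left')
qed

lemma pt_ht_butlast_up:
  assumes "p \<noteq> []" "last p"
  shows "pt_ht p (length p - 1) = ht p - 1"
proof -
  have "ht p = ht (butlast p) + 1"
    using assms by (metis append_butlast_last_id ht_append ht_Cons ht_Nil step_ht_def add_0_right)
  then show ?thesis
    by (simp add: pt_ht_def butlast_conv_take)
qed

lemma pt_ht_splice_left:
  "k \<le> length L \<Longrightarrow> pt_ht (L @ A @ B @ R) k = pt_ht (L @ R) k"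
  by (simp add: pt_ht_append_left)

lemma pt_ht_splice_right:
  assumes "ht A = 0" "ht B = 0" "length L \<le> k"
  shows "pt_ht (L @ A @ B @ R) (k + length A + length B) = pt_ht (L @ R) k"
proof -
  obtain i where k: "k = length L + i"
    using assms(3) le_Suc_ex by blast
  have "pt_ht (L @ A @ B @ R) (k + length A + length B)
      = pt_ht (((L @ A) @ B) @ R) (length ((L @ A) @ B) + i)"
    by (simp add: k algebra_simps)
  then show ?thesis
    using assms(1,2) by (simp only: pt_ht_append_right k) simp
qed

lemma pt_ht_splice_last_up:
  assumes "B \<noteq> []" "last B"
  shows "pt_ht (L @ A @ B @ R) (length L + length A + length B - 1) = ht L + ht A + ht B - 1"
proof -
  have "length L + length A + length B - 1 = length (L @ A) + (length B - 1)"
    using assms(1) by (cases B rule: rev_cases) auto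
  moreover have "pt_ht (B @ R) (length B - 1) = pt_ht B (length B - 1)"
    by (simp add: pt_ht_append_left)
  ultimately show ?thesis
    using pt_ht_append_right[of "L @ A" "B @ R"] pt_ht_butlast_up[OF assms] by (simp add: add.assoc)
qed

lemma min_ht_le_pt_ht: "min_ht C \<le> pt_ht C k"
proof (cases "k \<le> length C")
  case True
  show ?thesis
    unfolding min_ht_def by (rule Min_le) (use True in auto)
next
  case False
  have "min_ht C \<le> pt_ht C (length C)"
    unfolding min_ht_def by (rule Min_le) auto
  also have "\<dots> = pt_ht C k"
    using False by (simp add: pt_ht_beyond)
  finally show ?thesis .
qed

lemma cut_pt_is_min: "cut_pt C \<le> length C \<and> pt_ht C (cut_pt C) = min_ht C"
proof -
  have "finite {pt_ht C k | k. k \<le> length C}" "{pt_ht C k | k. k \<le> length C} \<noteq> {}"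
    by (simp, blast)
  then have "min_ht C \<in> {pt_ht C k | k. k \<le> length C}"
    unfolding min_ht_def by (rule Min_in)
  then obtain k where "k \<le> length C \<and> pt_ht C k = min_ht C"
    by auto
  then show ?thesis
    unfolding cut_pt_def by (rule LeastI)
qed

lemma min_ht_less_before_cut_pt:
  assumes "k < cut_pt C"
  shows "min_ht C < pt_ht C k"
proof -
  have "\<not> (k \<le> length C \<and> pt_ht C k = min_ht C)"
    using not_less_Least assms unfolding cut_pt_def by blast
  moreover have "k \<le> length C"
    using assms cut_pt_is_min[of C] by simp
  ultimately show ?thesis
    using min_ht_le_pt_ht[of C k] by simp
qed

lemma min_ht_neg: "\<exists>k \<le> length C. pt_ht C k < 0 \<Longrightarrow> min_ht C < 0"
  using min_ht_le_pt_ht by (meson le_less_trans)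

lemma cut_pt_eqI:
  assumes "m \<le> length C" "\<And>k. pt_ht C m \<le> pt_ht C k" "\<And>k. k < m \<Longrightarrow> pt_ht C m < pt_ht C k"
  shows "cut_pt C = m"
proof -
  have min: "min_ht C = pt_ht C m"
    unfolding min_ht_def by (rule Min_eqI) (use assms in auto)
  show ?thesis
    unfolding cut_pt_def
  proof (rule Least_equality)
    fix k
    assume "k \<le> length C \<and> pt_ht C k = min_ht C"
    then show "m \<le> k"
      using assms(3)[of k] min by (cases "k < m") auto
  qed (use assms(1) min in simp)
qed

lemma cut_pt_splice:
  assumes "ht A = 0" "ht B = 0"
    and "\<And>k. k < length L \<Longrightarrow> ht L < pt_ht (L @ A @ B @ R) k"
    and "\<And>j. length L + length A + length B \<le> j \<Longrightarrow> ht L \<le> pt_ht (L @ A @ B @ R) j"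
  shows "cut_pt (L @ R) = length L"
proof (rule cut_pt_eqI)
  have at_L: "pt_ht (L @ R) (length L) = ht L"
    by (simp add: pt_ht_def)
  show "length L \<le> length (L @ R)"
    by simp
  show less: "pt_ht (L @ R) (length L) < pt_ht (L @ R) k" if "k < length L" for k
    using assms(3)[OF that] pt_ht_splice_left[of k L A B R] that at_L by simp
  show "pt_ht (L @ R) (length L) \<le> pt_ht (L @ R) k" for k
  proof (cases "k < length L")
    case True
    then show ?thesis
      using less by (simp add: less_imp_le)
  next
    case False
    then show ?thesis
      using assms(4)[of "k + length A + length B"] pt_ht_splice_right[OF assms(1,2), of L k R] at_L
      by simp
  qed
qed

definition first_reach :: "lpath \<Rightarrow> int \<Rightarrow> nat" where
  "first_reach H h = (LEAST k. pt_ht H k \<le> h)"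

definition settle_pt :: "lpath \<Rightarrow> nat \<Rightarrow> int \<Rightarrow> nat" where
  "settle_pt H X h = (LEAST k. X \<le> k \<and> (\<forall>j \<ge> k. h \<le> pt_ht H j))"

definition tinv :: "lpath \<times> nat \<Rightarrow> lpath \<times> lpath \<times> lpath" where
  "tinv = (\<lambda>(H, X). let h = pt_ht H X; m = first_reach H h; e = settle_pt H X h in
            (drop m (take X H), drop X (take e H), take m H @ drop e H))"

lemma first_reach_eqI:
  "pt_ht H m \<le> h \<Longrightarrow> (\<And>k. k < m \<Longrightarrow> h < pt_ht H k) \<Longrightarrow> first_reach H h = m"
  unfolding first_reach_def by (rule Least_equality) (auto simp: not_le[symmetric])

lemma first_reach:
  assumes "pt_ht H X \<le> h" "h < 0"
  defines "m \<equiv> first_reach H h"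
  shows "m \<le> X" "pt_ht H m = h" "\<And>k. k < m \<Longrightarrow> h < pt_ht H k"
proof -
  show "m \<le> X"
    unfolding m_def first_reach_def by (rule Least_le) (rule assms(1))
  have reach: "pt_ht H m \<le> h"
    unfolding m_def first_reach_def by (rule LeastI[of _ X]) (rule assms(1))
  show before: "h < pt_ht H k" if "k < m" for k
    using not_less_Least[of k "\<lambda>k. pt_ht H k \<le> h"] that
    unfolding m_def first_reach_def by simp
  have "m \<noteq> 0"
    using reach assms(2) by (metis pt_ht_0 not_less)
  then obtain k where "m = Suc k"
    using not0_implies_Suc by blast
  then show "pt_ht H m = h"
    using before[of k] reach pt_ht_Suc_diff[of H k] by simp
qed

lemma settle_pt_eqI:
  assumes "X \<le> e" "\<And>j. e \<le> j \<Longrightarrow> h \<le> pt_ht H j" "e = X \<or> pt_ht H (e - 1) < h"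
  shows "settle_pt H X h = e"
  unfolding settle_pt_def
proof (rule Least_equality)
  fix k
  assume "X \<le> k \<and> (\<forall>j \<ge> k. h \<le> pt_ht H j)"
  then show "e \<le> k"
    using assms(3) by (cases "k < e") (auto dest: spec[of _ "e - 1"])
qed (use assms in auto)

lemma settle_pt:
  assumes "X \<le> length H" "pt_ht H X = h" "h \<le> ht H"
  defines "e \<equiv> settle_pt H X h"
  shows "X \<le> e" "e \<le> length H" "\<And>j. e \<le> j \<Longrightarrow> h \<le> pt_ht H j" "pt_ht H e = h"
    and "X < e \<Longrightarrow> H ! (e - 1)"
proof -
  let ?P = "\<lambda>k. X \<le> k \<and> (\<forall>j \<ge> k. h \<le> pt_ht H j)"
  have P_end: "?P (length H)"
    using assms(1,3) by (simp add: pt_ht_beyond)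
  have Pe: "?P e"
    unfolding e_def settle_pt_def by (rule LeastI[of ?P, OF P_end])
  show eH: "e \<le> length H"
    unfolding e_def settle_pt_def by (rule Least_le[of ?P, OF P_end])
  show "X \<le> e" "\<And>j. e \<le> j \<Longrightarrow> h \<le> pt_ht H j"
    using Pe by auto
  have dip: "pt_ht H k < h" if ek: "e = Suc k" "X \<le> k" for k
  proof -
    have "\<not> ?P k"
      using not_less_Least[of k ?P] ek unfolding e_def settle_pt_def by simp
    then obtain j where "k \<le> j" "pt_ht H j < h"
      using ek by auto
    moreover have "h \<le> pt_ht H j" if "j \<noteq> k"
      using Pe \<open>k \<le> j\<close> that ek by simp
    ultimately show ?thesis
      by (cases "j = k") auto
  qed
  show "pt_ht H e = h"
  proof (cases "X < e")
    case True
    then obtain k where k: "e = Suc k" "X \<le> k"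
      by (metis less_imp_Suc_add le_add1)
    then show ?thesis
      using dip[OF k] Pe pt_ht_Suc_diff[of H k] by fastforce
  next
    case False
    then show ?thesis
      using Pe assms(2) by simp
  qed
  show "H ! (e - 1)" if "X < e"
  proof -
    obtain k where k: "e = Suc k" "X \<le> k"
      using \<open>X < e\<close> by (metis less_imp_Suc_add le_add1)
    then have "k < length H"
      using eH by simp
    then show ?thesis
      using pt_ht_Suc[of k H] dip[OF k] Pe k by (auto simp: step_ht_def split: if_splits)
  qed
qed

lemma tmap_in_Dminus_and_tinv_tmap:
  assumes "(A, B, C) \<in> V n"
  shows "tmap (A, B, C) \<in> Dminus n \<and> tinv (tmap (A, B, C)) = (A, B, C)"
proof -
  from assms obtain i j k where ijk: "i + j + k = n" "ups A = i" "downs A = i"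
      "ups B = j" "downs B = j" "ups C = k" "downs C = k"
    and neg: "\<exists>k \<le> length C. pt_ht C k < 0" and B_up: "B = [] \<or> last B"
    unfolding V_def T_def by auto
  have bal: "ht A = 0" "ht B = 0"
    using ijk by (simp_all add: ht_eq_0_iff)
  define m where "m = cut_pt C"
  define \<mu> where "\<mu> = min_ht C"
  define L where "L = take m C"
  define R where "R = drop m C"
  define H where "H = L @ A @ B @ R"
  define X where "X = m + length A"
  have C: "C = L @ R" and lL: "length L = m" and htL: "ht L = \<mu>"
    using cut_pt_is_min[of C] by (auto simp: L_def R_def m_def \<mu>_def pt_ht_def)
  have tm: "tmap (A, B, C) = (H, X)"
    unfolding tmap_def H_def X_def L_def R_def m_def by (simp add: Let_def)
  have hX: "pt_ht H X = \<mu>"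
    using pt_ht_append_right[of "L @ A" "B @ R" 0] bal htL lL by (simp add: H_def X_def)
  have "first_reach H \<mu> = m"
  proof (rule first_reach_eqI)
    show "pt_ht H m \<le> \<mu>"
      using cut_pt_is_min[of C] pt_ht_splice_left[of m L] lL
      by (simp add: H_def C m_def \<mu>_def)
    show "\<mu> < pt_ht H k" if "k < m" for k
      using min_ht_less_before_cut_pt[of k C] pt_ht_splice_left[of k L] that lL
      by (simp add: H_def C m_def \<mu>_def)
  qed
  moreover have "settle_pt H X \<mu> = X + length B"
  proof (rule settle_pt_eqI)
    show "\<mu> \<le> pt_ht H j" if "X + length B \<le> j" for j
      using pt_ht_splice_right[OF bal, of L "j - length A - length B" R] min_ht_le_pt_ht that lL
      by (simp add: H_def X_def C \<mu>_def)
    show "X + length B = X \<or> pt_ht H (X + length B - 1) < \<mu>"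
    proof (cases "B = []")
      case False
      then show ?thesis
        using B_up pt_ht_splice_last_up[OF False, of L A R] bal htL lL by (simp add: H_def X_def)
    qed simp
  qed simp
  ultimately have "tinv (H, X) = (A, B, C)"
    unfolding tinv_def using hX lL by (simp add: H_def X_def C)
  moreover have "(H, X) \<in> Dminus n"
    using hX ijk lL min_ht_neg[OF neg]
    unfolding Dminus_def D_def H_def X_def \<mu>_def by (auto simp: C)
  ultimately show ?thesis
    using tm by simp
qed

lemma tinv_in_V_and_tmap_tinv:
  assumes "(H, X) \<in> Dminus n"
  shows "tinv (H, X) \<in> V n \<and> tmap (tinv (H, X)) = (H, X)"
proof -
  define h where "h = pt_ht H X"
  from assms have ud: "ups H = n" "downs H = n" and XH: "X \<le> length H" and neg: "h < 0"
    unfolding Dminus_def D_def h_def by auto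
  have htH: "ht H = 0"
    using ud by (simp add: ht_eq_0_iff)
  define m where "m = first_reach H h"
  define e where "e = settle_pt H X h"
  have mX: "m \<le> X" and hm: "pt_ht H m = h" and above_m: "\<And>k. k < m \<Longrightarrow> h < pt_ht H k"
    using first_reach[of H X h] neg by (simp_all add: m_def h_def)
  have Xe: "X \<le> e" and eH: "e \<le> length H" and he: "pt_ht H e = h"
    and above_e: "\<And>j. e \<le> j \<Longrightarrow> h \<le> pt_ht H j" and up: "X < e \<Longrightarrow> H ! (e - 1)"
    using settle_pt[of X H h] XH neg htH by (simp_all add: e_def h_def)
  define L where "L = take m H"
  define A where "A = drop m (take X H)"
  define B where "B = drop X (take e H)"
  define R where "R = drop e H"
  define C where "C = L @ R"
  have H: "H = L @ A @ B @ R"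
    unfolding L_def A_def B_def R_def using mX Xe
    by (metis append.assoc append_take_drop_id min.absorb1 take_take)
  have lL: "length L = m" and lA: "length A = X - m" and lB: "length B = e - X"
    using mX Xe eH XH by (simp_all add: L_def A_def B_def)
  have htL: "ht L = h"
    using hm by (simp add: L_def pt_ht_def)
  have bal: "ht A = 0" "ht B = 0"
    using ht_drop_take[OF mX, of H] ht_drop_take[OF Xe, of H] hm he
    by (simp_all add: A_def B_def h_def)
  have "ht C = 0"
    using htH htL bal by (simp add: C_def H)
  moreover have "ups A + ups B + ups C = n"
    using ud(1) by (simp add: H C_def)
  ultimately have "(A, B, C) \<in> T n"
    using bal unfolding T_def by (auto simp: ht_eq_0_iff)
  moreover have "\<exists>k \<le> length C. pt_ht C k < 0"
    using hm neg pt_ht_splice_left[of m L A B R] lL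
    by (intro exI[of _ m]) (simp add: C_def H[symmetric])
  moreover have "B = [] \<or> last B"
    using up eH lB by (cases "X < e") (auto simp: B_def last_conv_nth)
  moreover have "cut_pt C = m"
    unfolding C_def lL[symmetric]
  proof (rule cut_pt_splice[OF bal])
    show "ht L < pt_ht (L @ A @ B @ R) k" if "k < length L" for k
      using above_m[of k] that by (simp add: H[symmetric] htL lL)
    show "ht L \<le> pt_ht (L @ A @ B @ R) j" if "length L + length A + length B \<le> j" for j
      using above_e[of j] that mX Xe by (simp add: H[symmetric] htL lL lA lB)
  qed
  moreover have "tinv (H, X) = (A, B, C)"
    unfolding tinv_def by (simp add: Let_def A_def B_def C_def L_def R_def m_def e_def h_def)
  ultimately show ?thesis
    using lL lA mX unfolding V_def tmap_def by (simp add: C_def Let_def H[symmetric])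
qed

theorem lemma3:
  fixes n :: nat
  assumes "0 < n"
  shows "bij_betw tmap (V n) (Dminus n)"
proof (rule bij_betw_byWitness[where f' = tinv])
  show "\<forall>x\<in>V n. tinv (tmap x) = x" "tmap ` V n \<subseteq> Dminus n"
    using tmap_in_Dminus_and_tinv_tmap by force+
  show "\<forall>y\<in>Dminus n. tmap (tinv y) = y" "tinv ` Dminus n \<subseteq> V n"
    using tinv_in_V_and_tmap_tinv by force+
qed

end
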